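(* Let $\beta>0$, $\mu>0$ and $0<p<1$. Consider the system $$S_0'=\mu-\beta S_0A-\mu S_0,\qquad S_1'=(1-p)\beta S_0A-\beta S_1A-\mu S_1,\qquad A'=\beta(pS_0+S_1)A-\mu A$$ on the closed simplex $\Delta=\{(S_0,S_1,A): S_0,S_1,A\ge 0,\ S_0+S_1+A=1\}$. Then every solution starting in $\Delta$ converges, as $t\to\infty$, to an equilibrium point of the system. (Equivalently, for the planar system obtained by substituting $S_1=1-S_0-A$, $$S_0'=\mu-\beta S_0A-\mu S_0,\qquad A'=\beta[1-(1-p)S_0-A]A-\mu A,$$ on the region $S_0\ge0$, $A\ge0$, $S_0+A\le 1$, every trajectory approaches an equilibrium.)
   Context: This is the two-stage contagion model with permanent adoption: $S_0,S_1,A$ are the population fractions of naive, informed and adopter individuals; $\beta$ is the effective contact rate, $\mu$ the per capita demographic turnover rate, and $p$ the probability that a naive individual adopts upon first effective contact with an adopter. The simplex $\Delta$ is forward invariant. *)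

theory Defs
  imports "HOL-Analysis.Analysis"
begin

definition fS0 :: "real \<Rightarrow> real \<Rightarrow> real \<Rightarrow> real \<Rightarrow> real \<Rightarrow> real \<Rightarrow> real" where
  "fS0 \<beta> \<mu> p s0 s1 a = \<mu> - \<beta> * s0 * a - \<mu> * s0"

definition fS1 :: "real \<Rightarrow> real \<Rightarrow> real \<Rightarrow> real \<Rightarrow> real \<Rightarrow> real \<Rightarrow> real" where
  "fS1 \<beta> \<mu> p s0 s1 a = (1 - p) * \<beta> * s0 * a - \<beta> * s1 * a - \<mu> * s1"

definition fA :: "real \<Rightarrow> real \<Rightarrow> real \<Rightarrow> real \<Rightarrow> real \<Rightarrow> real \<Rightarrow> real" where
  "fA \<beta> \<mu> p s0 s1 a = \<beta> * (p * s0 + s1) * a - \<mu> * a"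

definition in_simplex :: "real \<Rightarrow> real \<Rightarrow> real \<Rightarrow> bool" where
  "in_simplex s0 s1 a \<longleftrightarrow> s0 \<ge> 0 \<and> s1 \<ge> 0 \<and> a \<ge> 0 \<and> s0 + s1 + a = 1"

definition is_equilibrium :: "real \<Rightarrow> real \<Rightarrow> real \<Rightarrow> real \<Rightarrow> real \<Rightarrow> real \<Rightarrow> bool" where
  "is_equilibrium \<beta> \<mu> p s0 s1 a \<longleftrightarrow>
     fS0 \<beta> \<mu> p s0 s1 a = 0 \<and> fS1 \<beta> \<mu> p s0 s1 a = 0 \<and> fA \<beta> \<mu> p s0 s1 a = 0"

end

theory Submission
  imports Defs
begin

text \<open>
  The total population \<open>S0 + S1 + A\<close> relaxes to \<open>1\<close> at rate \<open>\<mu>\<close>, so it stays \<open>1\<close>,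
  and positivity of the three classes follows from comparison principles for linear ODEs.
  The key observation is that \<open>u = S0'\<close> and \<open>q = -A'\<close> satisfy a cooperative linear system
  \<open>u' = -(\<beta>A + \<mu>) u + \<beta>S0 q\<close>, \<open>q' = (1 - p)\<beta>A u + (\<beta>(pS0 + S1) - \<mu> - \<beta>A) q\<close>.
  Cooperative systems preserve the closed positive and negative orthants; hence either
  \<open>u\<close> and \<open>q\<close> eventually share a sign forever, or \<open>u q < 0\<close> throughout and neither ever
  vanishes. Either way \<open>S0\<close> and \<open>A\<close> are eventually monotone, hence convergent, and a
  convergent function whose derivative converges has derivative tending to \<open>0\<close>, so the
  limit is an equilibrium.
\<close>

lemma first_root_after:
  fixes f :: "real \<Rightarrow> real"
  assumes "a \<le> b" and cont: "continuous_on {a..b} f" and "f a > 0" and "f b \<le> 0"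
  shows "\<exists>s. a < s \<and> s \<le> b \<and> f s = 0 \<and> (\<forall>t. a \<le> t \<longrightarrow> t < s \<longrightarrow> f t > 0)"
proof -
  define Z where "Z = {a..b} \<inter> f -` {..0}"
  have "b \<in> Z" and bdd: "bdd_below Z"
    using assms by (auto simp: Z_def intro: bdd_belowI[of _ a])
  moreover have "closed Z"
    unfolding Z_def by (intro continuous_closed_preimage cont closed_atLeastAtMost closed_atMost)
  ultimately have "Inf Z \<in> Z"
    by (intro closed_contains_Inf) auto
  define s where "s = Inf Z"
  have s: "a \<le> s" "s \<le> b" "f s \<le> 0"
    using \<open>Inf Z \<in> Z\<close> by (auto simp: s_def Z_def)
  have before: "f t > 0" if "a \<le> t" "t < s" for t
  proof (rule ccontr)
    assume "\<not> f t > 0"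
    then have "t \<in> Z" using that s by (auto simp: Z_def)
    then have "s \<le> t" unfolding s_def by (rule cInf_lower[OF _ bdd])
    with that show False by simp
  qed
  obtain x where x: "a \<le> x" "x \<le> s" "f x = 0"
    using IVT2'[of f s 0 a] s assms(3) continuous_on_subset[OF cont] by fastforce
  then have "s \<le> x"
    unfolding s_def using s by (intro cInf_lower[OF _ bdd]) (auto simp: Z_def s_def)
  with x have "s = x" by simp
  with x assms(3) have "a < s" by (cases "a = s") auto
  with s x \<open>s = x\<close> before show ?thesis by blast
qed

lemma DERIV_nonpos_at_first_root:
  fixes f :: "real \<Rightarrow> real"
  assumes "(f has_real_derivative l) (at s)" and "a < s" and "f s = 0"
    and "\<And>t. a \<le> t \<Longrightarrow> t < s \<Longrightarrow> f t > 0"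
  shows "l \<le> 0"
proof (rule ccontr)
  assume "\<not> l \<le> 0"
  then obtain d where "d > 0" and d: "\<And>h. h > 0 \<Longrightarrow> h < d \<Longrightarrow> f (s - h) < f s"
    using DERIV_pos_inc_left[OF assms(1)] by auto
  define h where "h = min (d / 2) (s - a)"
  have "0 < h" "h < d" "a \<le> s - h"
    using \<open>d > 0\<close> \<open>a < s\<close> by (auto simp: h_def)
  then show False
    using d[of h] assms(4)[of "s - h"] assms(3) by simp
qed

lemma cooperative_linear_system_pos:
  fixes u q a b c d hu hq :: "real \<Rightarrow> real"
  assumes "t\<^sub>0 \<le> T" and "continuous_on {t\<^sub>0..T} u" and "continuous_on {t\<^sub>0..T} q"
    and du: "\<And>t. t\<^sub>0 < t \<Longrightarrow> t \<le> T \<Longrightarrow> (u has_real_derivative a t * u t + b t * q t + hu t) (at t)"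
    and dq: "\<And>t. t\<^sub>0 < t \<Longrightarrow> t \<le> T \<Longrightarrow> (q has_real_derivative c t * u t + d t * q t + hq t) (at t)"
    and "\<And>t. t\<^sub>0 \<le> t \<Longrightarrow> t \<le> T \<Longrightarrow> 0 \<le> b t" and "\<And>t. t\<^sub>0 \<le> t \<Longrightarrow> t \<le> T \<Longrightarrow> 0 \<le> c t"
    and "\<And>t. t\<^sub>0 \<le> t \<Longrightarrow> t \<le> T \<Longrightarrow> 0 < hu t" and "\<And>t. t\<^sub>0 \<le> t \<Longrightarrow> t \<le> T \<Longrightarrow> 0 < hq t"
    and "0 < u t\<^sub>0" and "0 < q t\<^sub>0"
  shows "0 < u T \<and> 0 < q T"
proof (rule ccontr)
  assume "\<not> (0 < u T \<and> 0 < q T)"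
  then have "min (u T) (q T) \<le> 0" by auto
  moreover have "continuous_on {t\<^sub>0..T} (\<lambda>t. min (u t) (q t))"
    using assms(2,3) by (intro continuous_intros)
  ultimately obtain s where s: "t\<^sub>0 < s" "s \<le> T" "min (u s) (q s) = 0"
    and before: "\<And>t. t\<^sub>0 \<le> t \<Longrightarrow> t < s \<Longrightarrow> 0 < min (u t) (q t)"
    using first_root_after[of t\<^sub>0 T "\<lambda>t. min (u t) (q t)"] assms(1,10,11)
    by auto
  have "u s = 0 \<and> 0 \<le> q s \<or> q s = 0 \<and> 0 \<le> u s"
    using s(3) by linarith
  then show False
  proof
    assume "u s = 0 \<and> 0 \<le> q s"
    moreover have "a s * u s + b s * q s + hu s \<le> 0"
      by (rule DERIV_nonpos_at_first_root[OF du[OF s(1,2)] s(1)])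
        (use before calculation in \<open>auto simp: min_less_iff_conj\<close>)
    moreover have "0 \<le> b s * q s"
      using assms(6)[of s] s(1,2) calculation by simp
    ultimately show False
      using assms(8)[of s] s(1,2) by simp
  next
    assume "q s = 0 \<and> 0 \<le> u s"
    moreover have "c s * u s + d s * q s + hq s \<le> 0"
      by (rule DERIV_nonpos_at_first_root[OF dq[OF s(1,2)] s(1)])
        (use before calculation in \<open>auto simp: min_less_iff_conj\<close>)
    moreover have "0 \<le> c s * u s"
      using assms(7)[of s] s(1,2) calculation by simp
    ultimately show False
      using assms(9)[of s] s(1,2) by simp
  qed
qed

lemma cooperative_linear_system_nonneg:
  fixes u q a b c d hu hq :: "real \<Rightarrow> real"
  assumes "t\<^sub>0 \<le> T" and "continuous_on {t\<^sub>0..T} u" and "continuous_on {t\<^sub>0..T} q"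
    and du: "\<And>t. t\<^sub>0 < t \<Longrightarrow> t \<le> T \<Longrightarrow> (u has_real_derivative a t * u t + b t * q t + hu t) (at t)"
    and dq: "\<And>t. t\<^sub>0 < t \<Longrightarrow> t \<le> T \<Longrightarrow> (q has_real_derivative c t * u t + d t * q t + hq t) (at t)"
    and "\<And>t. t\<^sub>0 \<le> t \<Longrightarrow> t \<le> T \<Longrightarrow> 0 \<le> b t" and "\<And>t. t\<^sub>0 \<le> t \<Longrightarrow> t \<le> T \<Longrightarrow> 0 \<le> c t"
    and "\<And>t. t\<^sub>0 \<le> t \<Longrightarrow> t \<le> T \<Longrightarrow> 0 \<le> hu t" and "\<And>t. t\<^sub>0 \<le> t \<Longrightarrow> t \<le> T \<Longrightarrow> 0 \<le> hq t"
    and "\<And>t. t\<^sub>0 \<le> t \<Longrightarrow> t \<le> T \<Longrightarrow> a t + b t \<le> L"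
    and "\<And>t. t\<^sub>0 \<le> t \<Longrightarrow> t \<le> T \<Longrightarrow> c t + d t \<le> L"
    and "0 \<le> u t\<^sub>0" and "0 \<le> q t\<^sub>0"
  shows "0 \<le> u T \<and> 0 \<le> q T"
proof -
  have "0 < u T + \<delta> \<and> 0 < q T + \<delta>" if "\<delta> > 0" for \<delta>
  proof -
    \<comment> \<open>Adding \<open>E\<close> to both components makes the forcing strictly positive, since \<open>E' = (L + 1) E\<close>
      outgrows the row sums; the strict lemma applies and \<open>E T = \<delta>\<close>.\<close>
    define E where "E t = \<delta> / exp ((L + 1) * (T - t\<^sub>0)) * exp ((L + 1) * (t - t\<^sub>0))" for t
    have E_pos: "0 < E t" for t
      using that by (simp add: E_def)
    have dE: "(E has_real_derivative (L + 1) * E t) (at t)" for t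
      unfolding E_def by (auto intro!: derivative_eq_intros)
    have "0 < (\<lambda>t. u t + E t) T \<and> 0 < (\<lambda>t. q t + E t) T"
    proof (rule cooperative_linear_system_pos[where u = "\<lambda>t. u t + E t" and q = "\<lambda>t. q t + E t"
          and a = a and b = b and c = c and d = d
          and hu = "\<lambda>t. hu t + (L + 1 - a t - b t) * E t"
          and hq = "\<lambda>t. hq t + (L + 1 - c t - d t) * E t"])
      fix t assume t: "t\<^sub>0 < t" "t \<le> T"
      show "((\<lambda>t. u t + E t) has_real_derivative
          a t * (u t + E t) + b t * (q t + E t) + (hu t + (L + 1 - a t - b t) * E t)) (at t)"
        using DERIV_add[OF du[OF t] dE] by (simp add: algebra_simps)
      show "((\<lambda>t. q t + E t) has_real_derivative
          c t * (u t + E t) + d t * (q t + E t) + (hq t + (L + 1 - c t - d t) * E t)) (at t)"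
        using DERIV_add[OF dq[OF t] dE] by (simp add: algebra_simps)
    next
      have "continuous_on {t\<^sub>0..T} E"
        unfolding E_def by (intro continuous_intros)
      then show "continuous_on {t\<^sub>0..T} (\<lambda>t. u t + E t)"
        and "continuous_on {t\<^sub>0..T} (\<lambda>t. q t + E t)"
        using assms(2,3) by (auto intro: continuous_on_add)
    next
      fix t assume t: "t\<^sub>0 \<le> t" "t \<le> T"
      show "0 < hu t + (L + 1 - a t - b t) * E t"
        using assms(8,10)[OF t] E_pos[of t] by (intro add_nonneg_pos mult_pos_pos) auto
      show "0 < hq t + (L + 1 - c t - d t) * E t"
        using assms(9,11)[OF t] E_pos[of t] by (intro add_nonneg_pos mult_pos_pos) auto
    qed (use assms E_pos[of t\<^sub>0] in \<open>auto intro: add_nonneg_pos\<close>)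
    then show ?thesis
      by (simp add: E_def)
  qed
  from this[of "- u T"] this[of "- q T"] show ?thesis
    by linarith
qed

lemma linear_ode_nonneg:
  fixes u a h :: "real \<Rightarrow> real"
  assumes "t\<^sub>0 \<le> T" and "continuous_on {t\<^sub>0..T} u"
    and "\<And>t. t\<^sub>0 < t \<Longrightarrow> t \<le> T \<Longrightarrow> (u has_real_derivative a t * u t + h t) (at t)"
    and "\<And>t. t\<^sub>0 \<le> t \<Longrightarrow> t \<le> T \<Longrightarrow> 0 \<le> h t" and "\<And>t. t\<^sub>0 \<le> t \<Longrightarrow> t \<le> T \<Longrightarrow> a t \<le> L"
    and "0 \<le> u t\<^sub>0"
  shows "0 \<le> u T"
proof -
  have "0 \<le> u T \<and> 0 \<le> (\<lambda>_. 1::real) T"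
  proof (rule cooperative_linear_system_nonneg[where u = u and q = "\<lambda>_. 1" and a = a and b = "\<lambda>_. 0"
        and c = "\<lambda>_. 0" and d = "\<lambda>_. 0" and hu = h and hq = "\<lambda>_. 0" and L = "max L 0"])
    fix t assume "t\<^sub>0 < t" "t \<le> T"
    then show "(u has_real_derivative a t * u t + 0 * 1 + h t) (at t)"
      using assms(3) by simp
  qed (use assms in \<open>auto simp: le_max_iff_disj\<close>)
  then show ?thesis by simp
qed

lemma continuous_nonvanishing_constant_sign:
  fixes f :: "real \<Rightarrow> real"
  assumes "continuous_on {t\<^sub>0..} f" and "\<And>t. t\<^sub>0 \<le> t \<Longrightarrow> f t \<noteq> 0"
  shows "(\<forall>t\<ge>t\<^sub>0. 0 < f t) \<or> (\<forall>t\<ge>t\<^sub>0. f t < 0)"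
proof (rule ccontr)
  assume "\<not> ?thesis"
  then obtain t1 t2 where t: "t\<^sub>0 \<le> t1" "t\<^sub>0 \<le> t2" "f t1 \<le> 0" "0 \<le> f t2"
    by (auto simp: not_less)
  have cont: "continuous_on {x..y} f" if "t\<^sub>0 \<le> x" for x y
    using assms(1) by (rule continuous_on_subset) (use that in auto)
  obtain x where "t\<^sub>0 \<le> x" "f x = 0"
  proof (cases "t1 \<le> t2")
    case True
    then obtain z where "t1 \<le> z" "f z = 0"
      using IVT'[of f t1 0 t2] cont[OF t(1)] t by auto
    with t(1) show ?thesis using that[of z] by simp
  next
    case False
    then obtain z where "t2 \<le> z" "f z = 0"
      using IVT2'[of f t1 0 t2] cont[OF t(2)] t by auto
    with t(2) show ?thesis using that[of z] by simp
  qed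
  with assms(2) show False by blast
qed

lemma cooperative_linear_system_eventually_signed:
  fixes u q a b c d :: "real \<Rightarrow> real"
  assumes cont: "continuous_on {t\<^sub>0..} u" "continuous_on {t\<^sub>0..} q"
    and du: "\<And>t. t\<^sub>0 < t \<Longrightarrow> (u has_real_derivative a t * u t + b t * q t) (at t)"
    and dq: "\<And>t. t\<^sub>0 < t \<Longrightarrow> (q has_real_derivative c t * u t + d t * q t) (at t)"
    and coop: "\<And>t. t\<^sub>0 \<le> t \<Longrightarrow> 0 \<le> b t" "\<And>t. t\<^sub>0 \<le> t \<Longrightarrow> 0 \<le> c t"
    and row_sums: "\<And>t. t\<^sub>0 \<le> t \<Longrightarrow> a t + b t \<le> L" "\<And>t. t\<^sub>0 \<le> t \<Longrightarrow> c t + d t \<le> L"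
  shows "(eventually (\<lambda>t. 0 \<le> u t) at_top \<or> eventually (\<lambda>t. u t \<le> 0) at_top) \<and>
         (eventually (\<lambda>t. 0 \<le> q t) at_top \<or> eventually (\<lambda>t. q t \<le> 0) at_top)"
proof (cases "\<exists>t1\<ge>t\<^sub>0. 0 \<le> u t1 * q t1")
  case True
  then obtain t1 where "t\<^sub>0 \<le> t1" "0 \<le> u t1 * q t1" by blast
  have cont': "continuous_on {t1..T} u" "continuous_on {t1..T} q" for T
    using cont \<open>t\<^sub>0 \<le> t1\<close> by (auto elim: continuous_on_subset)
  have nonneg: "0 \<le> u T \<and> 0 \<le> q T" if "0 \<le> u t1" "0 \<le> q t1" "t1 \<le> T" for T
    by (rule cooperative_linear_system_nonneg[where t\<^sub>0 = t1 and a = a and b = b and c = c and d = d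
          and hu = "\<lambda>_. 0" and hq = "\<lambda>_. 0" and L = L])
      (use that cont' \<open>t\<^sub>0 \<le> t1\<close> du dq coop row_sums in auto)
  have nonpos: "0 \<le> - u T \<and> 0 \<le> - q T" if "u t1 \<le> 0" "q t1 \<le> 0" "t1 \<le> T" for T
  proof (rule cooperative_linear_system_nonneg[where t\<^sub>0 = t1 and u = "\<lambda>t. - u t" and q = "\<lambda>t. - q t"
        and a = a and b = b and c = c and d = d and hu = "\<lambda>_. 0" and hq = "\<lambda>_. 0" and L = L])
    fix t assume "t1 < t" "t \<le> T"
    then have "t\<^sub>0 < t" using \<open>t\<^sub>0 \<le> t1\<close> by simp
    show "((\<lambda>t. - u t) has_real_derivative a t * - u t + b t * - q t + 0) (at t)"
      using DERIV_minus[OF du[OF \<open>t\<^sub>0 < t\<close>]] by simp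
    show "((\<lambda>t. - q t) has_real_derivative c t * - u t + d t * - q t + 0) (at t)"
      using DERIV_minus[OF dq[OF \<open>t\<^sub>0 < t\<close>]] by simp
  qed (use that cont' \<open>t\<^sub>0 \<le> t1\<close> coop row_sums in \<open>auto intro: continuous_on_minus\<close>)
  have "0 \<le> u t1 \<and> 0 \<le> q t1 \<or> u t1 \<le> 0 \<and> q t1 \<le> 0"
    using \<open>0 \<le> u t1 * q t1\<close> by (auto simp: zero_le_mult_iff)
  then show ?thesis
  proof
    assume "0 \<le> u t1 \<and> 0 \<le> q t1"
    then have "eventually (\<lambda>T. 0 \<le> u T \<and> 0 \<le> q T) at_top"
      by (intro eventually_mono[OF eventually_ge_at_top[of t1]] nonneg) auto
    then show ?thesis by (simp add: eventually_conj_iff)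
  next
    assume "u t1 \<le> 0 \<and> q t1 \<le> 0"
    then have "eventually (\<lambda>T. u T \<le> 0 \<and> q T \<le> 0) at_top"
      using nonpos by (intro eventually_mono[OF eventually_ge_at_top[of t1]]) force
    then show ?thesis by (simp add: eventually_conj_iff)
  qed
next
  case False
  then have "u t \<noteq> 0" "q t \<noteq> 0" if "t\<^sub>0 \<le> t" for t
    using that by auto
  then have "(\<forall>t\<ge>t\<^sub>0. 0 < u t) \<or> (\<forall>t\<ge>t\<^sub>0. u t < 0)"
    and "(\<forall>t\<ge>t\<^sub>0. 0 < q t) \<or> (\<forall>t\<ge>t\<^sub>0. q t < 0)"
    using cont by (simp_all add: continuous_nonvanishing_constant_sign)
  then have "((\<forall>t\<ge>t\<^sub>0. 0 \<le> u t) \<or> (\<forall>t\<ge>t\<^sub>0. u t \<le> 0)) \<and>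
      ((\<forall>t\<ge>t\<^sub>0. 0 \<le> q t) \<or> (\<forall>t\<ge>t\<^sub>0. q t \<le> 0))"
    by (meson less_imp_le)
  then show ?thesis
    unfolding eventually_at_top_linorder by blast
qed

lemma mono_on_bounded_tendsto_at_top:
  fixes f :: "real \<Rightarrow> real"
  assumes mono: "mono_on {t\<^sub>0<..} f" and bound: "\<And>t. t\<^sub>0 < t \<Longrightarrow> f t \<le> B"
  shows "(f \<longlongrightarrow> (SUP t\<in>{t\<^sub>0<..}. f t)) at_top"
proof (rule increasing_tendsto)
  have bdd: "bdd_above (f ` {t\<^sub>0<..})"
    using bound by (intro bdd_aboveI2[where M = B]) simp
  show "eventually (\<lambda>t. f t \<le> (SUP t\<in>{t\<^sub>0<..}. f t)) at_top"
    using eventually_gt_at_top[of t\<^sub>0] by eventually_elim (simp add: cSUP_upper bdd)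
  fix x assume "x < (SUP t\<in>{t\<^sub>0<..}. f t)"
  then obtain s where s: "t\<^sub>0 < s" "x < f s"
    using less_cSUP_iff[OF _ bdd] by auto
  show "eventually (\<lambda>t. x < f t) at_top"
    using eventually_ge_at_top[of s]
  proof eventually_elim
    case (elim t)
    then have "f s \<le> f t"
      using s(1) by (intro mono_onD[OF mono]) auto
    with s(2) show ?case by simp
  qed
qed

lemma DERIV_nonneg_imp_mono_on:
  fixes f :: "real \<Rightarrow> real"
  assumes "\<And>t. t\<^sub>0 < t \<Longrightarrow> (f has_real_derivative f' t) (at t)" and "\<And>t. t\<^sub>0 < t \<Longrightarrow> 0 \<le> f' t"
  shows "mono_on {t\<^sub>0<..} f"
proof (rule mono_onI)
  fix x y assume x: "x \<in> {t\<^sub>0<..}" and "y \<in> {t\<^sub>0<..}" and "x \<le> y"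
  show "f x \<le> f y"
  proof (rule DERIV_nonneg_imp_increasing_open[OF \<open>x \<le> y\<close>])
    fix z assume "x < z" "z < y"
    with x have "t\<^sub>0 < z" by simp
    then show "\<exists>l. (f has_real_derivative l) (at z) \<and> 0 \<le> l"
      using assms by blast
  next
    show "continuous_on {x..y} f"
      using x by (intro continuous_at_imp_continuous_on ballI DERIV_isCont[OF assms(1)]) auto
  qed
qed

lemma DERIV_eventually_signed_bounded_convergent:
  fixes f :: "real \<Rightarrow> real"
  assumes deriv: "\<And>t. t\<^sub>0 < t \<Longrightarrow> (f has_real_derivative f' t) (at t)"
    and sign: "eventually (\<lambda>t. 0 \<le> f' t) at_top \<or> eventually (\<lambda>t. f' t \<le> 0) at_top"
    and bound: "\<And>t. t\<^sub>0 < t \<Longrightarrow> \<bar>f t\<bar> \<le> B"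
  shows "\<exists>L. (f \<longlongrightarrow> L) at_top"
proof -
  from sign obtain N where "(\<forall>t\<ge>N. 0 \<le> f' t) \<or> (\<forall>t\<ge>N. f' t \<le> 0)"
    unfolding eventually_at_top_linorder by blast
  then have "(\<forall>t>max t\<^sub>0 N. 0 \<le> f' t) \<or> (\<forall>t>max t\<^sub>0 N. f' t \<le> 0)"
    by auto
  then show ?thesis
  proof
    assume "\<forall>t>max t\<^sub>0 N. 0 \<le> f' t"
    then have "mono_on {max t\<^sub>0 N<..} f"
      using deriv by (intro DERIV_nonneg_imp_mono_on) auto
    then show ?thesis
      using mono_on_bounded_tendsto_at_top[of "max t\<^sub>0 N" f B] bound by (auto simp: abs_le_iff)
  next
    assume "\<forall>t>max t\<^sub>0 N. f' t \<le> 0"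
    then have "mono_on {max t\<^sub>0 N<..} (\<lambda>t. - f t)"
      using deriv by (intro DERIV_nonneg_imp_mono_on[where f' = "\<lambda>t. - f' t"]) (auto intro: DERIV_minus)
    then have "((\<lambda>t. - (- f t)) \<longlongrightarrow> - (SUP t\<in>{max t\<^sub>0 N<..}. - f t)) at_top"
      using mono_on_bounded_tendsto_at_top[of "max t\<^sub>0 N" "\<lambda>t. - f t" B] bound
      by (intro tendsto_minus) (auto simp: abs_le_iff)
    then show ?thesis by auto
  qed
qed

lemma DERIV_tendsto_at_top_imp_zero:
  fixes f :: "real \<Rightarrow> real"
  assumes deriv: "\<And>t. t\<^sub>0 < t \<Longrightarrow> (f has_real_derivative f' t) (at t)"
    and "(f \<longlongrightarrow> L) at_top" and f'_lim: "(f' \<longlongrightarrow> c) at_top"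
  shows "c = 0"
proof -
  have "filterlim (\<lambda>t. 1 + t) at_top (at_top :: real filter)"
    by (rule filterlim_tendsto_add_at_top[OF tendsto_const filterlim_ident])
  then have "((\<lambda>t. f (t + 1)) \<longlongrightarrow> L) at_top"
    using filterlim_compose[OF assms(2)] by (simp add: add.commute)
  then have "((\<lambda>t. f (t + 1) - f t) \<longlongrightarrow> L - L) at_top"
    using assms(2) by (rule tendsto_diff)
  \<comment> \<open>By the mean value theorem \<open>f (t + 1) - f t\<close> is a value of \<open>f'\<close> beyond \<open>t\<close>.\<close>
  moreover have "((\<lambda>t. f (t + 1) - f t) \<longlongrightarrow> c) at_top"
  proof (rule tendstoI)
    fix e :: real assume "0 < e"
    then obtain t1 where t1: "\<And>s. t1 \<le> s \<Longrightarrow> dist (f' s) c < e"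
      using tendstoD[OF f'_lim] by (auto simp: eventually_at_top_linorder)
    show "eventually (\<lambda>t. dist (f (t + 1) - f t) c < e) at_top"
      using eventually_gt_at_top[of "max t\<^sub>0 t1"]
    proof eventually_elim
      case (elim t)
      then obtain z where "t < z" "z < t + 1" "f (t + 1) - f t = (t + 1 - t) * f' z"
        using MVT2[of t "t + 1" f f'] deriv by force
      then show ?case
        using t1[of z] elim by simp
    qed
  qed
  ultimately show ?thesis
    using tendsto_unique[OF trivial_limit_at_top_linorder] by fastforce
qed

lemma has_real_derivative_at_if_within_atLeast:
  assumes "(f has_real_derivative D) (at t within {a..})" and "a < t"
  shows "(f has_real_derivative D) (at t)"
proof -
  have "at t within {a..} = at t"
    using assms(2) by (intro at_within_interior) simp
  with assms(1) show ?thesis by simp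
qed

locale contagion_model =
  fixes \<beta> \<mu> p :: real and S0 S1 A :: "real \<Rightarrow> real"
  assumes beta_pos: "\<beta> > 0" and mu_pos: "\<mu> > 0" and p_pos: "0 < p" and p_less_1: "p < 1"
    and S0_deriv_within: "\<And>t. t \<ge> 0 \<Longrightarrow> (S0 has_real_derivative fS0 \<beta> \<mu> p (S0 t) (S1 t) (A t)) (at t within {0..})"
    and S1_deriv_within: "\<And>t. t \<ge> 0 \<Longrightarrow> (S1 has_real_derivative fS1 \<beta> \<mu> p (S0 t) (S1 t) (A t)) (at t within {0..})"
    and A_deriv_within: "\<And>t. t \<ge> 0 \<Longrightarrow> (A has_real_derivative fA \<beta> \<mu> p (S0 t) (S1 t) (A t)) (at t within {0..})"
    and initial_in_simplex: "in_simplex (S0 0) (S1 0) (A 0)"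
begin

definition S0' :: "real \<Rightarrow> real" where "S0' t = fS0 \<beta> \<mu> p (S0 t) (S1 t) (A t)"
definition S1' :: "real \<Rightarrow> real" where "S1' t = fS1 \<beta> \<mu> p (S0 t) (S1 t) (A t)"
definition A' :: "real \<Rightarrow> real" where "A' t = fA \<beta> \<mu> p (S0 t) (S1 t) (A t)"

lemma S0_deriv: "0 < t \<Longrightarrow> (S0 has_real_derivative S0' t) (at t)"
  using has_real_derivative_at_if_within_atLeast[OF S0_deriv_within] by (simp add: S0'_def)

lemma S1_deriv: "0 < t \<Longrightarrow> (S1 has_real_derivative S1' t) (at t)"
  using has_real_derivative_at_if_within_atLeast[OF S1_deriv_within] by (simp add: S1'_def)

lemma A_deriv: "0 < t \<Longrightarrow> (A has_real_derivative A' t) (at t)"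
  using has_real_derivative_at_if_within_atLeast[OF A_deriv_within] by (simp add: A'_def)

lemma continuous_on_solution:
  assumes "T \<subseteq> {0..}"
  shows "continuous_on T S0" "continuous_on T S1" "continuous_on T A"
proof -
  have "continuous_on {0..} S0" "continuous_on {0..} S1" "continuous_on {0..} A"
    unfolding continuous_on_eq_continuous_within
    using DERIV_continuous[OF S0_deriv_within] DERIV_continuous[OF S1_deriv_within]
      DERIV_continuous[OF A_deriv_within] by auto
  then show "continuous_on T S0" "continuous_on T S1" "continuous_on T A"
    using assms by (auto intro: continuous_on_subset)
qed

lemma continuous_on_derivs:
  assumes "T \<subseteq> {0..}" shows "continuous_on T S0'" "continuous_on T A'"
  unfolding S0'_def A'_def fS0_def fA_def
  using continuous_on_solution[OF assms] by (auto intro!: continuous_intros)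

lemma initial_nonneg: "0 \<le> S0 0" "0 \<le> S1 0" "0 \<le> A 0" and initial_total: "S0 0 + S1 0 + A 0 = 1"
  using initial_in_simplex by (auto simp: in_simplex_def)

lemma sum_of_derivs: "S0' t + S1' t + A' t = \<mu> * (1 - (S0 t + S1 t + A t))"
  by (simp add: S0'_def S1'_def A'_def fS0_def fS1_def fA_def algebra_simps)

lemma total_population:
  assumes "0 \<le> t" shows "S0 t + S1 t + A t = 1"
proof -
  define y where "y s = S0 s + S1 s + A s - 1" for s
  have dy: "(y has_real_derivative - \<mu> * y s) (at s)" if "0 < s" for s
  proof -
    have "S0' s + S1' s + A' s - 0 = - \<mu> * y s"
      using sum_of_derivs[of s] by (simp add: y_def algebra_simps)
    moreover have "(y has_real_derivative S0' s + S1' s + A' s - 0) (at s)"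
      unfolding y_def using that by (intro DERIV_diff DERIV_add S0_deriv S1_deriv A_deriv DERIV_const)
    ultimately show ?thesis by simp
  qed
  have cy: "continuous_on {0..t} y"
    unfolding y_def using continuous_on_solution[of "{0..t}"] by (auto intro!: continuous_intros)
  have "0 \<le> y t"
    by (rule linear_ode_nonneg[where t\<^sub>0 = 0 and T = t and u = y and a = "\<lambda>_. - \<mu>"
          and h = "\<lambda>_. 0" and L = 0])
      (use assms cy dy mu_pos initial_total in \<open>auto simp: y_def\<close>)
  moreover have "0 \<le> - y t"
  proof (rule linear_ode_nonneg[where t\<^sub>0 = 0 and T = t and u = "\<lambda>s. - y s" and a = "\<lambda>_. - \<mu>"
        and h = "\<lambda>_. 0" and L = 0])
    fix s assume "0 < s" "s \<le> t"
    show "((\<lambda>s. - y s) has_real_derivative - \<mu> * - y s + 0) (at s)"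
      using DERIV_minus[OF dy[OF \<open>0 < s\<close>]] by simp
  qed (use assms continuous_on_minus[OF cy] mu_pos initial_total in \<open>auto simp: y_def\<close>)
  ultimately show ?thesis by (simp add: y_def)
qed

lemma A_nonneg:
  assumes "0 \<le> t" shows "0 \<le> A t"
proof -
  define g where "g s = \<beta> * (p * S0 s + S1 s) - \<mu>" for s
  have "continuous_on {0..t} g"
    unfolding g_def using continuous_on_solution[of "{0..t}"] by (auto intro!: continuous_intros)
  moreover have "{0..t} \<noteq> {}"
    using assms by simp
  ultimately obtain x where x: "\<forall>s\<in>{0..t}. g s \<le> g x"
    using continuous_attains_sup[OF compact_Icc] by blast
  show ?thesis
  proof (rule linear_ode_nonneg[where t\<^sub>0 = 0 and T = t and u = A and a = g and h = "\<lambda>_. 0"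
        and L = "g x"])
    fix s assume "0 < s" "s \<le> t"
    show "(A has_real_derivative g s * A s + 0) (at s)"
      using A_deriv[OF \<open>0 < s\<close>] by (simp add: A'_def fA_def g_def algebra_simps)
  qed (use assms x initial_nonneg continuous_on_solution[of "{0..t}"] in auto)
qed

lemma S0_nonneg:
  assumes "0 \<le> t" shows "0 \<le> S0 t"
proof (rule linear_ode_nonneg[where t\<^sub>0 = 0 and T = t and u = S0 and a = "\<lambda>s. - (\<beta> * A s + \<mu>)"
      and h = "\<lambda>_. \<mu>" and L = 0])
  fix s assume "0 < s" "s \<le> t"
  show "(S0 has_real_derivative - (\<beta> * A s + \<mu>) * S0 s + \<mu>) (at s)"
    using S0_deriv[OF \<open>0 < s\<close>] by (simp add: S0'_def fS0_def algebra_simps)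
next
  fix s :: real assume "0 \<le> s"
  then have "0 \<le> \<beta> * A s"
    using A_nonneg[of s] beta_pos by simp
  then show "- (\<beta> * A s + \<mu>) \<le> 0"
    using mu_pos by simp
qed (use assms initial_nonneg mu_pos continuous_on_solution[of "{0..t}"] in auto)

lemma S1_nonneg:
  assumes "0 \<le> t" shows "0 \<le> S1 t"
proof (rule linear_ode_nonneg[where t\<^sub>0 = 0 and T = t and u = S1 and a = "\<lambda>s. - (\<beta> * A s + \<mu>)"
      and h = "\<lambda>s. (1 - p) * \<beta> * S0 s * A s" and L = 0])
  fix s assume "0 < s" "s \<le> t"
  show "(S1 has_real_derivative - (\<beta> * A s + \<mu>) * S1 s + (1 - p) * \<beta> * S0 s * A s) (at s)"
    using S1_deriv[OF \<open>0 < s\<close>] by (simp add: S1'_def fS1_def algebra_simps)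
next
  fix s :: real assume "0 \<le> s"
  then have "0 \<le> \<beta> * A s" "0 \<le> (1 - p) * \<beta> * S0 s * A s"
    using A_nonneg[of s] S0_nonneg[of s] beta_pos p_less_1 by simp_all
  then show "- (\<beta> * A s + \<mu>) \<le> 0" "0 \<le> (1 - p) * \<beta> * S0 s * A s"
    using mu_pos by simp_all
qed (use assms initial_nonneg continuous_on_solution[of "{0..t}"] in auto)

lemma in_simplex_forward: "0 \<le> t \<Longrightarrow> in_simplex (S0 t) (S1 t) (A t)"
  using S0_nonneg S1_nonneg A_nonneg total_population by (simp add: in_simplex_def)

lemma abs_solution_le_1:
  assumes "0 \<le> t" shows "\<bar>S0 t\<bar> \<le> 1" "\<bar>A t\<bar> \<le> 1"
  using in_simplex_forward[OF assms] by (auto simp: in_simplex_def)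

lemma S0'_deriv:
  assumes "0 < t"
  shows "(S0' has_real_derivative - (\<beta> * A t + \<mu>) * S0' t + \<beta> * S0 t * - A' t) (at t)"
proof -
  have "S0' = (\<lambda>t. \<mu> - \<beta> * S0 t * A t - \<mu> * S0 t)"
    by (simp add: S0'_def fS0_def fun_eq_iff)
  then show ?thesis
    using S0_deriv[OF assms] A_deriv[OF assms]
    by (auto intro!: derivative_eq_intros simp: algebra_simps)
qed

lemma minus_A'_deriv:
  assumes "0 < t"
  shows "((\<lambda>t. - A' t) has_real_derivative
    (1 - p) * \<beta> * A t * S0' t + (\<beta> * (p * S0 t + S1 t) - \<mu> - \<beta> * A t) * - A' t) (at t)"
proof -
  have "S1' t = - S0' t - A' t"
    using sum_of_derivs[of t] total_population[of t] assms by simp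
  then have dS1: "(S1 has_real_derivative - S0' t - A' t) (at t)"
    using S1_deriv[OF assms] by simp
  have "(\<lambda>t. - A' t) = (\<lambda>t. - (\<beta> * (p * S0 t + S1 t) * A t - \<mu> * A t))"
    by (simp add: A'_def fA_def fun_eq_iff)
  then show ?thesis
    using S0_deriv[OF assms] dS1 A_deriv[OF assms]
    by (auto intro!: derivative_eq_intros simp: algebra_simps)
qed

lemma derivs_eventually_signed:
  "(eventually (\<lambda>t. 0 \<le> S0' t) at_top \<or> eventually (\<lambda>t. S0' t \<le> 0) at_top) \<and>
   (eventually (\<lambda>t. 0 \<le> - A' t) at_top \<or> eventually (\<lambda>t. - A' t \<le> 0) at_top)"
proof (rule cooperative_linear_system_eventually_signed[where t\<^sub>0 = 0 and u = S0' and q = "\<lambda>t. - A' t"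
      and a = "\<lambda>t. - (\<beta> * A t + \<mu>)" and b = "\<lambda>t. \<beta> * S0 t"
      and c = "\<lambda>t. (1 - p) * \<beta> * A t" and d = "\<lambda>t. \<beta> * (p * S0 t + S1 t) - \<mu> - \<beta> * A t"
      and L = \<beta>])
  fix t :: real assume "0 \<le> t"
  then have "in_simplex (S0 t) (S1 t) (A t)"
    by (rule in_simplex_forward)
  then have simplex: "0 \<le> S0 t" "0 \<le> S1 t" "0 \<le> A t" "S0 t + S1 t + A t = 1"
    by (simp_all add: in_simplex_def)
  show "0 \<le> \<beta> * S0 t" "0 \<le> (1 - p) * \<beta> * A t"
    using simplex beta_pos p_less_1 by simp_all
  have "\<beta> * S0 t \<le> \<beta>" "0 \<le> \<beta> * A t"
    using simplex beta_pos by (simp_all add: mult_left_le)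
  then show "- (\<beta> * A t + \<mu>) + \<beta> * S0 t \<le> \<beta>"
    using mu_pos by simp
  have "p * S0 t + S1 t \<le> 1"
    using simplex p_less_1 mult_right_mono[of p 1 "S0 t"] by simp
  then have "\<beta> * (p * S0 t + S1 t) \<le> \<beta>"
    using beta_pos by (simp add: mult_left_le)
  moreover have "0 \<le> p * (\<beta> * A t)"
    using simplex beta_pos p_pos by simp
  ultimately show "(1 - p) * \<beta> * A t + (\<beta> * (p * S0 t + S1 t) - \<mu> - \<beta> * A t) \<le> \<beta>"
    using mu_pos by (simp add: algebra_simps)
qed (use continuous_on_derivs[of "{0..}"] S0'_deriv minus_A'_deriv
    in \<open>auto intro: continuous_on_minus\<close>)

lemma S0_convergent: "\<exists>L. (S0 \<longlongrightarrow> L) at_top"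
  using derivs_eventually_signed
  by (intro DERIV_eventually_signed_bounded_convergent[where t\<^sub>0 = 0 and f' = S0' and B = 1])
    (auto simp: S0_deriv abs_solution_le_1)

lemma A_convergent: "\<exists>L. (A \<longlongrightarrow> L) at_top"
  using derivs_eventually_signed
  by (intro DERIV_eventually_signed_bounded_convergent[where t\<^sub>0 = 0 and f' = A' and B = 1])
    (auto simp: A_deriv abs_solution_le_1 disj_commute)

theorem converges_to_equilibrium:
  "\<exists>e0 e1 ea. is_equilibrium \<beta> \<mu> p e0 e1 ea \<and>
     (S0 \<longlongrightarrow> e0) at_top \<and> (S1 \<longlongrightarrow> e1) at_top \<and> (A \<longlongrightarrow> ea) at_top"
proof -
  obtain e0 ea where S0_lim: "(S0 \<longlongrightarrow> e0) at_top" and A_lim: "(A \<longlongrightarrow> ea) at_top"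
    using S0_convergent A_convergent by blast
  define e1 where "e1 = 1 - e0 - ea"
  have "eventually (\<lambda>t. 1 - S0 t - A t = S1 t) at_top"
    using eventually_ge_at_top[of 0] by eventually_elim (simp add: total_population[symmetric])
  then have S1_lim: "(S1 \<longlongrightarrow> e1) at_top"
    unfolding e1_def by (rule tendsto_cong[THEN iffD1]) (intro tendsto_intros S0_lim A_lim)
  have "(S0' \<longlongrightarrow> fS0 \<beta> \<mu> p e0 e1 ea) at_top" "(A' \<longlongrightarrow> fA \<beta> \<mu> p e0 e1 ea) at_top"
    unfolding S0'_def A'_def fS0_def fA_def by (intro tendsto_intros S0_lim S1_lim A_lim)+
  then have "fS0 \<beta> \<mu> p e0 e1 ea = 0" "fA \<beta> \<mu> p e0 e1 ea = 0"
    using DERIV_tendsto_at_top_imp_zero[OF S0_deriv S0_lim]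
      DERIV_tendsto_at_top_imp_zero[OF A_deriv A_lim] by auto
  moreover have
    "fS1 \<beta> \<mu> p e0 e1 ea = \<mu> * (1 - (e0 + e1 + ea)) - fS0 \<beta> \<mu> p e0 e1 ea - fA \<beta> \<mu> p e0 e1 ea"
    by (simp add: fS0_def fS1_def fA_def algebra_simps)
  ultimately show ?thesis
    using S0_lim S1_lim A_lim by (auto simp: is_equilibrium_def e1_def)
qed

end

theorem proposition1:
  fixes \<beta> \<mu> p :: real and S0 S1 A :: "real \<Rightarrow> real"
  assumes "\<beta> > 0" and "\<mu> > 0" and "0 < p" and "p < 1"
    and "\<And>t. t \<ge> 0 \<Longrightarrow> (S0 has_real_derivative fS0 \<beta> \<mu> p (S0 t) (S1 t) (A t)) (at t within {0..})"
    and "\<And>t. t \<ge> 0 \<Longrightarrow> (S1 has_real_derivative fS1 \<beta> \<mu> p (S0 t) (S1 t) (A t)) (at t within {0..})"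
    and "\<And>t. t \<ge> 0 \<Longrightarrow> (A has_real_derivative fA \<beta> \<mu> p (S0 t) (S1 t) (A t)) (at t within {0..})"
    and "in_simplex (S0 0) (S1 0) (A 0)"
  shows "\<exists>e0 e1 ea. is_equilibrium \<beta> \<mu> p e0 e1 ea \<and>
           (S0 \<longlongrightarrow> e0) at_top \<and> (S1 \<longlongrightarrow> e1) at_top \<and> (A \<longlongrightarrow> ea) at_top"
proof -
  interpret contagion_model \<beta> \<mu> p S0 S1 A
    by unfold_locales (use assms in auto)
  show ?thesis
    by (rule converges_to_equilibrium)
qed

end
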